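(* For every integer $s \geq 1$, every integer $m \geq 1$, every integer $\ell > |V(H[s])| + m + s$, and every graph $H[s,\ell,m]$ constructed as described, it holds that $c(H[s,\ell,m]) \leq 2$.
   Context: Construction. Let $s \geq 1$ and $k = 2^{s-1}$. Let $H[s]$ be any $2k$-regular graph with girth at least $5$, endowed with an orientation in which every vertex has exactly $k$ outgoing and $k$ incoming edges. Given an integer $\ell \geq 1$, build $H[s,\ell]$: for each vertex $a$ of $H[s]$ take a complete balanced binary tree $T(a)$ of height $s$ with root $r(a)$ and $2^s = 2k$ leaves; let $r^{\mathrm{in}}(a), r^{\mathrm{out}}(a)$ be the two children of $r(a)$ and $T^{\mathrm{in}}(a), T^{\mathrm{out}}(a)$ the subtrees rooted at them. Associate bijectively the $k$ leaves of $T^{\mathrm{in}}(a)$ with the $k$ incoming edges at $a$ and the $k$ leaves of $T^{\mathrm{out}}(a)$ with the $k$ outgoing edges at $a$. For each edge $ab$ of $H[s]$ oriented from $a$ to $b$, join the leaf of $T^{\mathrm{out}}(a)$ associated with $ab$ to the leaf of $T^{\mathrm{in}}(b)$ associated with $ab$ by a path $P(ab)$ of length $2\ell+1$ (with $2\ell$ new inner vertices); let $e(ab)$ be its middle edge, with endpoint $v(a,b)$ on the side of $a$ and $v(b,a)$ on the side of $b$. Given an integer $m \geq 1$, build $H[s,\ell,m]$: take two vertex-disjoint copies $H_1, H_2$ of $H[s,\ell]$ (with notation indexed by $1,2$), and for every edge $ab$ of $H[s]$ identify $e_1(ab)$ with $e_2(ab)$ so that $v_1(a,b)=v_2(a,b)$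 and $v_1(b,a)=v_2(b,a)$. For each vertex $a$ of $H[s]$ attach to $r_1(a)$ a new path $Q(a)$ of length $m$ with other endpoint $q(a)$. Finally add a cycle $C$ of length $|V(H[s])|$ passing through all vertices $q(a)$, $a \in V(H[s])$. Classical Cops and Robber: players alternate turns, cops first; the cops are placed on vertices, then the robber is placed on a vertex; in a turn each piece of the moving player may stay or move to an adjacent vertex; cops win if some cop is on the robber's vertex; $c(G)$ is the least number of cops that can force a win in finitely many turns. *)

theory Defs
  imports Main
begin

definition cop_step :: "('a \<Rightarrow> 'a \<Rightarrow> bool) \<Rightarrow> 'a list \<Rightarrow> 'a list \<Rightarrow> bool" where
  "cop_step adj cs cs' \<longleftrightarrow> length cs' = length cs \<and>
     (\<forall>i < length cs. cs' ! i = cs ! i \<or> adj (cs ! i) (cs' ! i))"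

definition rob_step :: "('a \<Rightarrow> 'a \<Rightarrow> bool) \<Rightarrow> 'a \<Rightarrow> 'a \<Rightarrow> bool" where
  "rob_step adj r r' \<longleftrightarrow> r' = r \<or> adj r r'"

text \<open>cops_win_within adj n cs r: it is the cops' turn, cops at cs, robber at r;
  the cops can force a capture within n cop turns.\<close>
fun cops_win_within :: "('a \<Rightarrow> 'a \<Rightarrow> bool) \<Rightarrow> nat \<Rightarrow> 'a list \<Rightarrow> 'a \<Rightarrow> bool" where
  "cops_win_within adj 0 cs r = (r \<in> set cs)"
| "cops_win_within adj (Suc n) cs r =
     (r \<in> set cs \<or>
      (\<exists>cs'. cop_step adj cs cs' \<and>
         (r \<in> set cs' \<or> (\<forall>r'. rob_step adj r r' \<longrightarrow> cops_win_within adj n cs' r'))))"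

definition cops_win :: "'a set \<Rightarrow> ('a \<Rightarrow> 'a \<Rightarrow> bool) \<Rightarrow> nat \<Rightarrow> bool" where
  "cops_win VV adj k \<longleftrightarrow>
     (\<exists>cs. length cs = k \<and> set cs \<subseteq> VV \<and>
        (\<forall>r \<in> VV. \<exists>n. cops_win_within adj n cs r))"

definition cop_number :: "'a set \<Rightarrow> ('a \<Rightarrow> 'a \<Rightarrow> bool) \<Rightarrow> nat" where
  "cop_number VV adj = (LEAST k. cops_win VV adj k)"

definition uadj :: "('v \<times> 'v) set \<Rightarrow> 'v \<Rightarrow> 'v \<Rightarrow> bool" where
  "uadj A a b \<longleftrightarrow> (a, b) \<in> A \<or> (b, a) \<in> A"

definition girth_ge5 :: "('v \<times> 'v) set \<Rightarrow> bool" where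
  "girth_ge5 A \<longleftrightarrow>
     (\<forall>a b c. \<not> (uadj A a b \<and> uadj A b c \<and> uadj A c a)) \<and>
     (\<forall>a b c d. a \<noteq> c \<and> b \<noteq> d \<longrightarrow>
         \<not> (uadj A a b \<and> uadj A b c \<and> uadj A c d \<and> uadj A d a))"

definition balanced_oriented_base :: "nat \<Rightarrow> 'v set \<Rightarrow> ('v \<times> 'v) set \<Rightarrow> bool" where
  "balanced_oriented_base k V A \<longleftrightarrow>
     finite V \<and> V \<noteq> {} \<and> A \<subseteq> V \<times> V \<and>
     (\<forall>a. (a, a) \<notin> A) \<and> (\<forall>a b. (a, b) \<in> A \<longrightarrow> (b, a) \<notin> A) \<and>
     (\<forall>a \<in> V. card {b. (a, b) \<in> A} = k \<and> card {b. (b, a) \<in> A} = k) \<and>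
     girth_ge5 A"

text \<open>Vertices: T c a xs is the node xs (a bool list of length <= s, root = []) of the
  tree T_c(a) in copy c (True = copy 1, False = copy 2); lists starting with False form
  T^in(a), lists starting with True form T^out(a). P c e j is the j-th inner vertex
  (1 <= j <= 2l) of the path P_c(e); for j = l, l+1 (endpoints of the middle edge, shared by
  both copies) only c = True is used. Q a i is the i-th vertex (1 <= i <= m) of Q(a),
  so Q a m = q(a).\<close>
datatype 'v hvert = T bool 'v "bool list" | P bool "'v \<times> 'v" nat | Q 'v nat

definition pnode :: "nat \<Rightarrow> ('v \<Rightarrow> 'v \<times> 'v \<Rightarrow> bool list) \<Rightarrow> ('v \<Rightarrow> 'v \<times> 'v \<Rightarrow> bool list)
    \<Rightarrow> bool \<Rightarrow> 'v \<times> 'v \<Rightarrow> nat \<Rightarrow> 'v hvert" where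
  "pnode l inl outl c e j =
     (if j = 0 then T c (fst e) (outl (fst e) e)
      else if j = 2 * l + 1 then T c (snd e) (inl (snd e) e)
      else if j = l \<or> j = l + 1 then P True e j
      else P c e j)"

definition qnode :: "'v \<Rightarrow> nat \<Rightarrow> 'v hvert" where
  "qnode a i = (if i = 0 then T True a [] else Q a i)"

definition Hverts :: "nat \<Rightarrow> nat \<Rightarrow> nat \<Rightarrow> 'v set \<Rightarrow> ('v \<times> 'v) set \<Rightarrow> 'v hvert set" where
  "Hverts s l m V A =
     {T c a xs | c a xs. a \<in> V \<and> length xs \<le> s} \<union>
     {P c e j | c e j. e \<in> A \<and> 1 \<le> j \<and> j \<le> 2 * l \<and> ((j = l \<or> j = l + 1) \<longrightarrow> c)} \<union>
     {Q a i | a i. a \<in> V \<and> 1 \<le> i \<and> i \<le> m}"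

definition Hedges :: "nat \<Rightarrow> nat \<Rightarrow> nat \<Rightarrow> 'v set \<Rightarrow> ('v \<times> 'v) set
    \<Rightarrow> ('v \<Rightarrow> 'v \<times> 'v \<Rightarrow> bool list) \<Rightarrow> ('v \<Rightarrow> 'v \<times> 'v \<Rightarrow> bool list) \<Rightarrow> (nat \<Rightarrow> 'v)
    \<Rightarrow> ('v hvert \<times> 'v hvert) set" where
  "Hedges s l m V A inl outl \<sigma> =
     {(T c a xs, T c a (xs @ [b])) | c a xs b. a \<in> V \<and> length xs < s} \<union>
     {(pnode l inl outl c e j, pnode l inl outl c e (Suc j)) | c e j. e \<in> A \<and> j \<le> 2 * l} \<union>
     {(qnode a i, qnode a (Suc i)) | a i. a \<in> V \<and> i < m} \<union>
     {(Q (\<sigma> i) m, Q (\<sigma> ((i + 1) mod card V)) m) | i. i < card V}"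

definition Hadj :: "nat \<Rightarrow> nat \<Rightarrow> nat \<Rightarrow> 'v set \<Rightarrow> ('v \<times> 'v) set
    \<Rightarrow> ('v \<Rightarrow> 'v \<times> 'v \<Rightarrow> bool list) \<Rightarrow> ('v \<Rightarrow> 'v \<times> 'v \<Rightarrow> bool list) \<Rightarrow> (nat \<Rightarrow> 'v)
    \<Rightarrow> 'v hvert \<Rightarrow> 'v hvert \<Rightarrow> bool" where
  "Hadj s l m V A inl outl \<sigma> x y \<longleftrightarrow>
     (x, y) \<in> Hedges s l m V A inl outl \<sigma> \<or> (y, x) \<in> Hedges s l m V A inl outl \<sigma>"

end

(*
  The cops chase shadows of the robber under a chain of retractions. fold_copy identifies the
  two copies of H[s,l]; core_retract maps each path P(e) of copy 1 onto a walk in the core X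
  (the trees of copy 1, the paths Q(a) and the cycle C), which is possible because l is large;
  cycle_retract collapses X onto C. Each map sends a robber move to at most one step, so each
  shadow moves like a robber.

  Starting at q(sigma 0), one cop stays there, which cuts C into a path, and the other walks
  along it until some cop is next to the shadow on C. Each further phase refines the shadow:
  one cop keeps to the coarser shadow; the finer shadow either agrees with it, which ends the
  phase, or lives in a tree hanging from it (Q(a) with T_1(a), a path P_1(e), or the part of
  copy 2 hanging from the root of T_2(a)) that it can only leave next to the first cop. The
  other cop walks to the root of that tree and down towards the finer shadow. After the last
  phase some cop is next to the robber itself.
*)

theory Submission
  imports Defs
begin

section \<open>Two cops chasing shadows\<close>

abbreviation near :: "('a \<Rightarrow> 'a \<Rightarrow> bool) \<Rightarrow> 'a \<Rightarrow> 'a \<Rightarrow> bool" where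
  "near \<equiv> rob_step"

lemma near_refl [simp]: "near adj x x"
  by (simp add: rob_step_def)

lemma cop_step_two: "cop_step adj [p1, p2] [p1', p2'] \<longleftrightarrow> near adj p1 p1' \<and> near adj p2 p2'"
  by (auto simp: cop_step_def rob_step_def less_Suc_eq)

inductive can_force :: "('a \<Rightarrow> 'a \<Rightarrow> bool) \<Rightarrow> ('a \<Rightarrow> 'a \<Rightarrow> 'a \<Rightarrow> bool) \<Rightarrow> 'a \<Rightarrow> 'a \<Rightarrow> 'a \<Rightarrow> bool"
  for adj goal where
  goal: "goal p1 p2 r \<Longrightarrow> can_force adj goal p1 p2 r"
| capture: "r = p1 \<or> r = p2 \<Longrightarrow> can_force adj goal p1 p2 r"
| move: "near adj p1 p1' \<Longrightarrow> near adj p2 p2' \<Longrightarrow>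
    r = p1' \<or> r = p2' \<or> (\<forall>r'. near adj r r' \<longrightarrow> can_force adj goal p1' p2' r') \<Longrightarrow>
    can_force adj goal p1 p2 r"

lemma can_force_trans:
  assumes "can_force adj goal p1 p2 r"
    and "\<And>p1 p2 r. goal p1 p2 r \<Longrightarrow> can_force adj goal' p1 p2 r"
  shows "can_force adj goal' p1 p2 r"
  using assms(1) by induction (use assms(2) in \<open>auto intro: can_force.intros\<close>)

lemma can_force_swap:
  "can_force adj goal p1 p2 r \<Longrightarrow> can_force adj (\<lambda>p1 p2. goal p2 p1) p2 p1 r"
  by (induction rule: can_force.induct) (auto intro: can_force.intros)

lemma cops_win_within_mono:
  "cops_win_within adj n cs r \<Longrightarrow> n \<le> n' \<Longrightarrow> cops_win_within adj n' cs r"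
proof (induction n arbitrary: n' cs r)
  case 0
  then show ?case by (cases n') auto
next
  case (Suc n)
  then obtain n'' where "n' = Suc n''" "n \<le> n''" by (cases n') auto
  with Suc show ?case by auto
qed

lemma cops_win_within_if_can_force:
  assumes "can_force adj (\<lambda>_ _ _. False) p1 p2 r" and finite_nbrs: "\<And>x. finite {y. adj x y}"
  shows "\<exists>n. cops_win_within adj n [p1, p2] r"
  using assms(1)
proof induction
  case (capture r p1 p2)
  then show ?case by (intro exI[of _ 0]) auto
next
  case (move p1 p1' p2 p2' r)
  then have step: "cop_step adj [p1, p2] [p1', p2']" by (simp add: cop_step_two)
  show ?case
  proof (cases "r = p1' \<or> r = p2'")
    case True
    then have "cops_win_within adj (Suc 0) [p1, p2] r" using step by auto
    then show ?thesis ..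
  next
    case False
    have "finite {r'. near adj r r'}"
      using finite_nbrs[of r] by (simp add: rob_step_def Collect_disj_eq)
    moreover have "\<forall>r' \<in> {r'. near adj r r'}.
        eventually (\<lambda>n. cops_win_within adj n [p1', p2'] r') sequentially"
    proof
      fix r' assume "r' \<in> {r'. near adj r r'}"
      then obtain n where "cops_win_within adj n [p1', p2'] r'" using move(3) False by auto
      then show "eventually (\<lambda>n. cops_win_within adj n [p1', p2'] r') sequentially"
        by (auto intro: eventually_sequentiallyI cops_win_within_mono)
    qed
    ultimately have "eventually (\<lambda>n. \<forall>r' \<in> {r'. near adj r r'}.
        cops_win_within adj n [p1', p2'] r') sequentially"
      by (rule eventually_ball_finite)
    then obtain n where "\<forall>r'. near adj r r' \<longrightarrow> cops_win_within adj n [p1', p2'] r'"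
      by (auto simp: eventually_sequentially)
    then have "cops_win_within adj (Suc n) [p1, p2] r" using step by auto
    then show ?thesis ..
  qed
qed simp

lemma can_force_by_measure:
  fixes \<mu> :: "'a \<Rightarrow> 'a \<Rightarrow> 'a \<Rightarrow> nat"
  assumes "S p1 p2 r"
    and progress: "\<And>p1 p2 r. S p1 p2 r \<Longrightarrow> \<not> goal p1 p2 r \<Longrightarrow>
      \<exists>p1' p2'. near adj p1 p1' \<and> near adj p2 p2' \<and> (\<forall>r'. near adj r r' \<longrightarrow>
        goal p1' p2' r' \<or> S p1' p2' r' \<and> \<mu> p1' p2' r' < \<mu> p1 p2 r)"
  shows "can_force adj goal p1 p2 r"
proof -
  have "can_force adj goal p1 p2 r" if "\<mu> p1 p2 r = k" and "S p1 p2 r" for k p1 p2 r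
    using that
  proof (induction k arbitrary: p1 p2 r rule: less_induct)
    case (less k)
    show ?case
    proof (cases "goal p1 p2 r")
      case True
      then show ?thesis by (rule can_force.goal)
    next
      case False
      then obtain p1' p2' where "near adj p1 p1'" "near adj p2 p2'"
        and next_pos: "\<forall>r'. near adj r r' \<longrightarrow>
          goal p1' p2' r' \<or> S p1' p2' r' \<and> \<mu> p1' p2' r' < \<mu> p1 p2 r"
        using progress less.prems(2) by blast
      moreover have "can_force adj goal p1' p2' r'" if "near adj r r'" for r'
        using next_pos that less.IH less.prems(1) by (blast intro: can_force.goal)
      ultimately show ?thesis by (blast intro: can_force.move)
    qed
  qed
  then show ?thesis using assms(1) by blast
qed

lemma can_force_travel:
  assumes "adj\<^sup>*\<^sup>* p2 (t r)" and "near adj p1 (g r)" and "K r"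
    and g_near: "\<And>r r'. K r \<Longrightarrow> near adj r r' \<Longrightarrow> near adj (g r) (g r')"
    and stable: "\<And>r r' p2. K r \<Longrightarrow> near adj r r' \<Longrightarrow> adj\<^sup>*\<^sup>* p2 (t r) \<Longrightarrow>
       goal (g r) p2 r' \<or> K r' \<and> t r' = t r"
    and arrive: "\<And>p1 r. near adj p1 (g r) \<Longrightarrow> K r \<Longrightarrow> can_force adj goal p1 (t r) r"
  shows "can_force adj goal p1 p2 r"
proof -
  have "t r = tt \<Longrightarrow> near adj p1 (g r) \<Longrightarrow> K r \<Longrightarrow> can_force adj goal p1 p2 r"
    if "adj\<^sup>*\<^sup>* p2 tt" for p2 tt
    using that
  proof (induction arbitrary: p1 r rule: converse_rtranclp_induct)
    case base
    then show ?case using arrive by blast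
  next
    case (step p2 z)
    have "can_force adj goal (g r) z r'" if r': "near adj r r'" for r'
    proof -
      have "adj\<^sup>*\<^sup>* z (t r)" using step.hyps(2) step.prems(1) by simp
      with stable[OF step.prems(3) r'] show ?thesis
        using step.IH[of r' "g r"] step.prems g_near[OF step.prems(3) r']
        by (auto intro: can_force.goal)
    qed
    moreover have "near adj p2 z" using step.hyps(1) by (simp add: rob_step_def)
    ultimately show ?case using step.prems(2) by (blast intro: can_force.move)
  qed
  then show ?thesis using assms(1-3) by blast
qed

locale cops_graph =
  fixes VV :: "'a set" and adj :: "'a \<Rightarrow> 'a \<Rightarrow> bool"
  assumes adj_sym: "adj x y \<Longrightarrow> adj y x"
    and adj_in: "adj x y \<Longrightarrow> x \<in> VV"
    and connected: "x \<in> VV \<Longrightarrow> y \<in> VV \<Longrightarrow> adj\<^sup>*\<^sup>* x y"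
    and finite_VV: "finite VV"
begin

lemma near_sym: "near adj x y \<Longrightarrow> near adj y x"
  by (auto simp: rob_step_def adj_sym)

lemma near_in: "near adj x y \<Longrightarrow> x \<in> VV \<Longrightarrow> y \<in> VV"
  by (auto simp: rob_step_def dest: adj_sym adj_in)

lemma near_in': "near adj x y \<Longrightarrow> y \<in> VV \<Longrightarrow> x \<in> VV"
  by (auto simp: rob_step_def dest: adj_in)

definition shadow_caught :: "('a \<Rightarrow> 'a) \<Rightarrow> 'a \<Rightarrow> 'a \<Rightarrow> 'a \<Rightarrow> bool" where
  "shadow_caught h p1 p2 r \<longleftrightarrow> p1 \<in> VV \<and> p2 \<in> VV \<and> r \<in> VV \<and>
     (near adj p1 (h r) \<or> near adj p2 (h r) \<or> near adj p1 r \<or> near adj p2 r)"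

lemma shadow_caught_swap: "(\<lambda>p1 p2. shadow_caught h p2 p1) = shadow_caught h"
  by (auto simp: shadow_caught_def fun_eq_iff)

lemma can_force_pursuit:
  fixes \<mu> :: "'a \<Rightarrow> 'a \<Rightarrow> nat"
  assumes "near adj p1 (g r)" and "I p2 r"
    and I_in: "\<And>p2 r. I p2 r \<Longrightarrow> p2 \<in> VV \<and> r \<in> VV"
    and g_in: "\<And>r. r \<in> VV \<Longrightarrow> g r \<in> VV"
    and g_near: "\<And>r r'. r \<in> VV \<Longrightarrow> near adj r r' \<Longrightarrow> near adj (g r) (g r')"
    and advance: "\<And>p2 r. I p2 r \<Longrightarrow> \<not> near adj p2 (h r) \<Longrightarrow>
       \<exists>p2'. near adj p2 p2' \<and> (\<forall>r'. near adj r r' \<longrightarrow>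
         near adj (g r) (h r') \<or> near adj p2' (h r') \<or> I p2' r' \<and> \<mu> p2' r' < \<mu> p2 r)"
  shows "can_force adj (shadow_caught h) p1 p2 r"
proof (rule can_force_by_measure[where S = "\<lambda>p1 p2 r. near adj p1 (g r) \<and> I p2 r"
      and \<mu> = "\<lambda>_. \<mu>"])
  show "near adj p1 (g r) \<and> I p2 r" using assms(1,2) ..
next
  fix p1 p2 r
  assume S: "near adj p1 (g r) \<and> I p2 r" and not_caught: "\<not> shadow_caught h p1 p2 r"
  then have in_VV: "p2 \<in> VV" "r \<in> VV" "g r \<in> VV" "p1 \<in> VV"
    using I_in g_in near_in' by blast+
  with not_caught have "\<not> near adj p2 (h r)" by (auto simp: shadow_caught_def)
  with S obtain p2' where p2': "near adj p2 p2'" and next_pos: "\<forall>r'. near adj r r' \<longrightarrow>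
      near adj (g r) (h r') \<or> near adj p2' (h r') \<or> I p2' r' \<and> \<mu> p2' r' < \<mu> p2 r"
    using advance by blast
  have "shadow_caught h (g r) p2' r' \<or> (near adj (g r) (g r') \<and> I p2' r') \<and> \<mu> p2' r' < \<mu> p2 r"
    if "near adj r r'" for r'
    using next_pos that in_VV near_in[OF p2'] near_in[OF that] g_near[OF _ that]
    by (auto simp: shadow_caught_def)
  then show "\<exists>p1' p2'. near adj p1 p1' \<and> near adj p2 p2' \<and> (\<forall>r'. near adj r r' \<longrightarrow>
      shadow_caught h p1' p2' r' \<or>
      (near adj p1' (g r') \<and> I p2' r') \<and> \<mu> p2' r' < \<mu> p2 r)"
    using S p2' near_sym by blast
qed

text \<open>\<open>\<beta> x k\<close> is the vertex at depth \<open>k\<close> on a path from the root \<open>\<beta> x 0\<close> down to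
  \<open>x = \<beta> x (\<delta> x)\<close>; these root paths are compatible with truncation. \<open>tree_step\<close> relates
  a vertex to itself, its parent and its children.\<close>
definition rooted_paths :: "'a set \<Rightarrow> ('a \<Rightarrow> nat) \<Rightarrow> ('a \<Rightarrow> nat \<Rightarrow> 'a) \<Rightarrow> bool" where
  "rooted_paths X \<delta> \<beta> \<longleftrightarrow> (\<forall>x \<in> X. \<beta> x (\<delta> x) = x \<and> (\<forall>k < \<delta> x. adj (\<beta> x k) (\<beta> x (Suc k))) \<and>
     (\<forall>k \<le> \<delta> x. \<beta> x k \<in> VV \<and> \<delta> (\<beta> x k) = k \<and> (\<forall>j \<le> k. \<beta> (\<beta> x k) j = \<beta> x j)))"

definition tree_step :: "('a \<Rightarrow> nat) \<Rightarrow> ('a \<Rightarrow> nat \<Rightarrow> 'a) \<Rightarrow> 'a \<Rightarrow> 'a \<Rightarrow> bool" where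
  "tree_step \<delta> \<beta> x y \<longleftrightarrow>
     y = x \<or> 0 < \<delta> x \<and> y = \<beta> x (\<delta> x - 1) \<or> 0 < \<delta> y \<and> x = \<beta> y (\<delta> y - 1)"

lemma rooted_pathsD:
  assumes "rooted_paths X \<delta> \<beta>" "x \<in> X"
  shows "\<beta> x (\<delta> x) = x" "k < \<delta> x \<Longrightarrow> adj (\<beta> x k) (\<beta> x (Suc k))"
    "k \<le> \<delta> x \<Longrightarrow> \<beta> x k \<in> VV" "k \<le> \<delta> x \<Longrightarrow> \<delta> (\<beta> x k) = k"
    "j \<le> k \<Longrightarrow> k \<le> \<delta> x \<Longrightarrow> \<beta> (\<beta> x k) j = \<beta> x j"
  using assms by (auto simp: rooted_paths_def)

lemma tree_step_branch:
  assumes "rooted_paths X \<delta> \<beta>" "x \<in> X" "y \<in> X" "tree_step \<delta> \<beta> x y" "k < \<delta> x"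
  shows "k \<le> \<delta> y \<and> \<beta> y k = \<beta> x k"
  using assms(4)
  unfolding tree_step_def
proof (elim disjE conjE)
  assume "0 < \<delta> x" "y = \<beta> x (\<delta> x - 1)"
  then show ?thesis using rooted_pathsD[OF assms(1,2)] assms(5) by simp
next
  assume "0 < \<delta> y" "x = \<beta> y (\<delta> y - 1)"
  moreover have "\<delta> x = \<delta> y - 1"
    using calculation rooted_pathsD(4)[OF assms(1,3), of "\<delta> y - 1"] by simp
  ultimately show ?thesis using rooted_pathsD(5)[OF assms(1,3), of k "\<delta> y - 1"] assms(5) by simp
qed (use assms(5) in simp)

lemma tree_step_root:
  assumes "rooted_paths X \<delta> \<beta>" "x \<in> X" "y \<in> X" "tree_step \<delta> \<beta> x y"
  shows "\<beta> y 0 = \<beta> x 0"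
  using assms(4) rooted_pathsD(5)[OF assms(1,2), of 0] rooted_pathsD(5)[OF assms(1,3), of 0]
  unfolding tree_step_def by auto

lemma rooted_paths_depth_bounded:
  assumes "rooted_paths X \<delta> \<beta>"
  shows "\<exists>B. \<forall>x \<in> X. \<delta> x \<le> B"
proof -
  have "X \<subseteq> VV" using rooted_pathsD(1,3)[OF assms] by (metis order_refl subsetI)
  then have "finite (\<delta> ` X)" using finite_VV by (meson finite_imageI finite_subset)
  then show ?thesis by (meson Max_ge imageI)
qed

text \<open>The second cop walks down the root path
  of \<open>h r\<close>, which stays valid under the robber's moves.\<close>
lemma can_force_descent:
  assumes paths: "rooted_paths X \<delta> \<beta>"
    and g_in: "\<And>r. r \<in> VV \<Longrightarrow> g r \<in> VV"
    and g_near: "\<And>r r'. r \<in> VV \<Longrightarrow> near adj r r' \<Longrightarrow> near adj (g r) (g r')"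
    and move: "\<And>r r'. r \<in> VV \<Longrightarrow> h r \<in> X \<Longrightarrow> near adj r r' \<Longrightarrow>
       near adj (g r) (h r') \<or> h r' \<in> X \<and> tree_step \<delta> \<beta> (h r) (h r')"
    and start: "near adj p1 (g r)" "r \<in> VV" "h r \<in> X" "k \<le> \<delta> (h r)"
  shows "can_force adj (shadow_caught h) p1 (\<beta> (h r) k) r"
proof -
  obtain B where bound: "\<And>x. x \<in> X \<Longrightarrow> \<delta> x \<le> B"
    using rooted_paths_depth_bounded[OF paths] by blast
  let ?I = "\<lambda>p2 r. r \<in> VV \<and> h r \<in> X \<and> (\<exists>k \<le> \<delta> (h r). p2 = \<beta> (h r) k)"
  show ?thesis
  proof (rule can_force_pursuit[where I = ?I and \<mu> = "\<lambda>p2 r. B - \<delta> p2"])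
    show "?I (\<beta> (h r) k) r" using start by blast
    show "p2 \<in> VV \<and> r \<in> VV" if "?I p2 r" for p2 r
      using that rooted_pathsD(3)[OF paths] by blast
    fix p2 r
    assume "?I p2 r" and far: "\<not> near adj p2 (h r)"
    then obtain k where r: "r \<in> VV" "h r \<in> X" and k: "k \<le> \<delta> (h r)" and p2: "p2 = \<beta> (h r) k"
      by blast
    note x = rooted_pathsD[OF paths r(2)]
    have "k \<noteq> \<delta> (h r)" using far p2 x(1) by auto
    moreover have "Suc k \<noteq> \<delta> (h r)" using far p2 x(1) x(2)[of k] k by (auto simp: rob_step_def)
    ultimately have k_less: "Suc k < \<delta> (h r)" using k by simp
    have "near adj (g r) (h r') \<or> near adj (\<beta> (h r) (Suc k)) (h r') \<or>
        ?I (\<beta> (h r) (Suc k)) r' \<and> B - \<delta> (\<beta> (h r) (Suc k)) < B - \<delta> p2"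
      if step: "near adj r r'" for r'
    proof -
      have "r' \<in> VV" using near_in step r(1) by blast
      moreover have "Suc k \<le> \<delta> (h r') \<and> \<beta> (h r') (Suc k) = \<beta> (h r) (Suc k)"
        if "h r' \<in> X" "tree_step \<delta> \<beta> (h r) (h r')"
        using tree_step_branch[OF paths r(2) that k_less] .
      moreover have "B - Suc k < B - k" using bound[OF r(2)] k_less by simp
      ultimately show ?thesis
        using move[OF r step] x(4) k k_less p2 by (metis less_imp_le)
    qed
    then show "\<exists>p2'. near adj p2 p2' \<and> (\<forall>r'. near adj r r' \<longrightarrow>
        near adj (g r) (h r') \<or> near adj p2' (h r') \<or> ?I p2' r' \<and> B - \<delta> p2' < B - \<delta> p2)"
      using x(2)[OF k_less[THEN Suc_lessD]] p2 by (auto simp: rob_step_def)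
  qed (use g_in g_near start in auto)
qed

text \<open>Refining the shadow \<open>g\<close> to \<open>h\<close>: outside the region \<open>X\<close> the two shadows agree; inside
  it, the second cop first travels to the root of the tree containing \<open>h r\<close>, which stays fixed.\<close>
lemma can_force_refine:
  assumes paths: "rooted_paths X \<delta> \<beta>"
    and g_in: "\<And>r. r \<in> VV \<Longrightarrow> g r \<in> VV"
    and g_near: "\<And>r r'. r \<in> VV \<Longrightarrow> near adj r r' \<Longrightarrow> near adj (g r) (g r')"
    and agree: "\<And>r. r \<in> VV \<Longrightarrow> h r \<notin> X \<Longrightarrow> h r = g r"
    and move: "\<And>r r'. r \<in> VV \<Longrightarrow> h r \<in> X \<Longrightarrow> near adj r r' \<Longrightarrow>
       near adj (g r) (h r') \<or> h r' \<in> X \<and> tree_step \<delta> \<beta> (h r) (h r')"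
    and in_VV: "p1 \<in> VV" "p2 \<in> VV" "r \<in> VV" and "near adj p1 (g r)"
  shows "can_force adj (shadow_caught h) p1 p2 r"
proof (cases "h r \<in> X")
  case False
  then show ?thesis
    using assms(9) in_VV agree by (intro can_force.goal) (simp add: shadow_caught_def)
next
  case True
  show ?thesis
  proof (rule can_force_travel[where K = "\<lambda>r. r \<in> VV \<and> h r \<in> X" and g = g
        and t = "\<lambda>r. \<beta> (h r) 0"])
    show "adj\<^sup>*\<^sup>* p2 (\<beta> (h r) 0)"
      using connected rooted_pathsD(3)[OF paths True] True in_VV by blast
    show "near adj p1 (g r)" by fact
    show "r \<in> VV \<and> h r \<in> X" using True in_VV by blast
    show "near adj (g r) (g r')" if "r \<in> VV \<and> h r \<in> X" "near adj r r'" for r r'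
      using that g_near by blast
    show "can_force adj (shadow_caught h) p1 (\<beta> (h r) 0) r" if "near adj p1 (g r)" "r \<in> VV \<and> h r \<in> X"
      for p1 r
      using that can_force_descent[where h = h and g = g and k = 0, OF paths g_in g_near move]
      by blast
    fix r r' p2
    assume K: "r \<in> VV \<and> h r \<in> X" and step: "near adj r r'" and walk: "adj\<^sup>*\<^sup>* p2 (\<beta> (h r) 0)"
    have r': "r' \<in> VV" using near_in step K by blast
    have p2: "p2 \<in> VV"
      using walk rooted_pathsD(3)[OF paths, of "h r" 0] K
      by (induction rule: converse_rtranclp_induct) (auto dest: adj_in)
    show "shadow_caught h (g r) p2 r' \<or> (r' \<in> VV \<and> h r' \<in> X) \<and> \<beta> (h r') 0 = \<beta> (h r) 0"
      using move[OF _ _ step] K r' p2 g_in tree_step_root[OF paths] by (auto simp: shadow_caught_def)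
  qed
qed

lemma can_force_shadow_trans:
  assumes "can_force adj (shadow_caught h) p1 p2 r"
    and next_phase: "\<And>p1 p2 r. p1 \<in> VV \<Longrightarrow> p2 \<in> VV \<Longrightarrow> r \<in> VV \<Longrightarrow> near adj p1 (h r) \<Longrightarrow>
       can_force adj (shadow_caught h') p1 p2 r"
  shows "can_force adj (shadow_caught h') p1 p2 r"
  using assms(1)
proof (rule can_force_trans)
  fix p1 p2 r
  assume caught: "shadow_caught h p1 p2 r"
  then have in_VV: "p1 \<in> VV" "p2 \<in> VV" "r \<in> VV" by (auto simp: shadow_caught_def)
  consider "near adj p1 (h r)" | "near adj p2 (h r)" | "near adj p1 r \<or> near adj p2 r"
    using caught by (auto simp: shadow_caught_def)
  then show "can_force adj (shadow_caught h') p1 p2 r"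
  proof cases
    case 2
    then have "can_force adj (shadow_caught h') p2 p1 r" using next_phase in_VV by blast
    then show ?thesis using can_force_swap[of adj "shadow_caught h'" p2 p1 r]
      by (simp add: shadow_caught_swap)
  qed (use next_phase in_VV in \<open>auto simp: shadow_caught_def intro: can_force.goal\<close>)
qed

lemma cop_number_le_2:
  assumes "c \<in> VV" and "\<And>r. r \<in> VV \<Longrightarrow> can_force adj (shadow_caught id) c c r"
  shows "cop_number VV adj \<le> 2"
proof -
  have capture: "can_force adj (\<lambda>_ _ _. False) p1 p2 r" if "shadow_caught id p1 p2 r" for p1 p2 r
  proof -
    from that have "near adj p1 r \<or> near adj p2 r" by (auto simp: shadow_caught_def)
    then show ?thesis
      by (metis can_force.move near_refl)
  qed
  have finite_nbrs: "finite {y. adj x y}" for x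
    using finite_VV by (rule finite_subset[rotated]) (auto dest: adj_sym adj_in)
  have "\<exists>n. cops_win_within adj n [c, c] r" if "r \<in> VV" for r
    using can_force_trans[OF assms(2)[OF that] capture] finite_nbrs
    by (rule cops_win_within_if_can_force)
  then have "cops_win VV adj 2"
    unfolding cops_win_def using assms(1) by (intro exI[of _ "[c, c]"]) auto
  then show ?thesis unfolding cop_number_def by (rule Least_le)
qed

end

section \<open>The graph \<open>H[s,l,m]\<close>\<close>

fun in_copy1 :: "'v hvert \<Rightarrow> bool" where
  "in_copy1 (T c a xs) = c" | "in_copy1 (P c e j) = c" | "in_copy1 (Q a i) = True"

fun in_core :: "'v hvert \<Rightarrow> bool" where
  "in_core (T c a xs) = c" | "in_core (P c e j) = False" | "in_core (Q a i) = True"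

text \<open>The properties of the construction used for the upper bound.\<close>
locale H_graph =
  fixes s l m :: nat and V :: "'v set" and A :: "('v \<times> 'v) set"
    and inl outl :: "'v \<Rightarrow> 'v \<times> 'v \<Rightarrow> bool list" and \<sigma> :: "nat \<Rightarrow> 'v"
  assumes s_pos: "1 \<le> s" and m_pos: "1 \<le> m" and l_large: "card V + m + s < l"
    and finite_V: "finite V" and V_nonempty: "V \<noteq> {}" and arcs_in: "A \<subseteq> V \<times> V"
    and out_arc: "a \<in> V \<Longrightarrow> \<exists>b. (a, b) \<in> A"
    and outl_length: "e \<in> A \<Longrightarrow> length (outl (fst e) e) = s"
    and inl_length: "e \<in> A \<Longrightarrow> length (inl (snd e) e) = s"
    and \<sigma>_bij: "bij_betw \<sigma> {..<card V} V"
begin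

abbreviation "N \<equiv> card V"
abbreviation "VV \<equiv> Hverts s l m V A"
abbreviation "adj \<equiv> Hadj s l m V A inl outl \<sigma>"
abbreviation "E \<equiv> Hedges s l m V A inl outl \<sigma>"
abbreviation "pn \<equiv> pnode l inl outl"

lemma l_ge_2: "2 \<le> l"
  using l_large m_pos s_pos by linarith

lemma N_pos: "0 < N"
  using finite_V V_nonempty by (simp add: card_gt_0_iff)

lemma arc_ends_in: "e \<in> A \<Longrightarrow> fst e \<in> V \<and> snd e \<in> V"
  using arcs_in by auto

definition idx :: "'v \<Rightarrow> nat" where
  "idx a = inv_into {..<N} \<sigma> a"

lemma \<sigma>_in: "i < N \<Longrightarrow> \<sigma> i \<in> V"
  using \<sigma>_bij by (auto simp: bij_betw_def)

lemma \<sigma>_inj: "i < N \<Longrightarrow> j < N \<Longrightarrow> \<sigma> i = \<sigma> j \<Longrightarrow> i = j"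
  using \<sigma>_bij by (auto simp: bij_betw_def inj_on_def)

lemma idx_less: "a \<in> V \<Longrightarrow> idx a < N"
  unfolding idx_def using \<sigma>_bij by (metis bij_betw_def inv_into_into lessThan_iff)

lemma \<sigma>_idx [simp]: "a \<in> V \<Longrightarrow> \<sigma> (idx a) = a"
  unfolding idx_def using \<sigma>_bij by (metis bij_betw_def f_inv_into_f)

lemma idx_\<sigma> [simp]: "i < N \<Longrightarrow> idx (\<sigma> i) = i"
  using idx_less \<sigma>_idx \<sigma>_in \<sigma>_inj by metis

lemma pnode_0: "pn c e 0 = T c (fst e) (outl (fst e) e)"
  by (simp add: pnode_def)

lemma pnode_last: "pn c e (Suc (2 * l)) = T c (snd e) (inl (snd e) e)"
  by (simp add: pnode_def)

lemma pnode_inner: "1 \<le> j \<Longrightarrow> j \<le> 2 * l \<Longrightarrow> pn c e j = P (c \<or> j = l \<or> j = Suc l) e j"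
  by (auto simp: pnode_def)

lemma pnode_eq_T: "j \<le> Suc (2 * l) \<Longrightarrow> pn c e j = T c' a xs \<longleftrightarrow>
   (j = 0 \<and> c' = c \<and> a = fst e \<and> xs = outl (fst e) e) \<or>
   (j = Suc (2 * l) \<and> c' = c \<and> a = snd e \<and> xs = inl (snd e) e)"
  using l_ge_2 by (auto simp: pnode_def)

lemma pnode_eq_P: "pn c e j = P c' e' j' \<longleftrightarrow>
   j \<noteq> 0 \<and> j \<noteq> Suc (2 * l) \<and> e' = e \<and> j' = j \<and> c' = (c \<or> j = l \<or> j = Suc l)"
  by (auto simp: pnode_def)

lemma pnode_neq_Q: "pn c e j \<noteq> Q a i"
  by (auto simp: pnode_def)

lemma qnode_0: "qnode a 0 = T True a []"
  by (simp add: qnode_def)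

lemma qnode_pos: "i \<noteq> 0 \<Longrightarrow> qnode a i = Q a i"
  by (simp add: qnode_def)

lemma qnode_eq_T: "qnode a i = T c b xs \<longleftrightarrow> i = 0 \<and> c \<and> b = a \<and> xs = []"
  by (auto simp: qnode_def)

lemma qnode_eq_Q: "qnode a i = Q b i' \<longleftrightarrow> i \<noteq> 0 \<and> b = a \<and> i' = i"
  by (auto simp: qnode_def)

lemma qnode_neq_P: "qnode a i \<noteq> P c e j"
  by (auto simp: qnode_def)

lemmas node_eqs = pnode_eq_T pnode_eq_P pnode_neq_Q qnode_eq_T qnode_eq_Q qnode_neq_P
  trans[OF eq_commute pnode_eq_T] trans[OF eq_commute pnode_eq_P] pnode_neq_Q[symmetric]
  trans[OF eq_commute qnode_eq_T] trans[OF eq_commute qnode_eq_Q] qnode_neq_P[symmetric]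

lemma edge_iff: "(x, y) \<in> E \<longleftrightarrow>
   (\<exists>c a xs b. x = T c a xs \<and> y = T c a (xs @ [b]) \<and> a \<in> V \<and> length xs < s) \<or>
   (\<exists>c e j. x = pn c e j \<and> y = pn c e (Suc j) \<and> e \<in> A \<and> j \<le> 2 * l) \<or>
   (\<exists>a i. x = qnode a i \<and> y = qnode a (Suc i) \<and> a \<in> V \<and> i < m) \<or>
   (\<exists>i. x = Q (\<sigma> i) m \<and> y = Q (\<sigma> (Suc i mod N)) m \<and> i < N)"
  unfolding Hedges_def by auto

lemma adj_iff: "adj x y \<longleftrightarrow> (x, y) \<in> E \<or> (y, x) \<in> E"
  unfolding Hadj_def ..

lemma adj_sym: "adj x y \<Longrightarrow> adj y x"
  by (auto simp: adj_iff)

lemma adj_tree: "a \<in> V \<Longrightarrow> length xs < s \<Longrightarrow> adj (T c a xs) (T c a (xs @ [b]))"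
  unfolding adj_iff Hedges_def by (rule disjI1, rule UnI1, rule UnI1, rule UnI1) blast

lemma adj_path: "e \<in> A \<Longrightarrow> j \<le> 2 * l \<Longrightarrow> adj (pn c e j) (pn c e (Suc j))"
  unfolding adj_iff Hedges_def by (rule disjI1, rule UnI1, rule UnI1, rule UnI2) blast

lemma adj_qpath: "a \<in> V \<Longrightarrow> i < m \<Longrightarrow> adj (qnode a i) (qnode a (Suc i))"
  unfolding adj_iff Hedges_def by (rule disjI1, rule UnI1, rule UnI2) blast

lemma adj_cycle: "i < N \<Longrightarrow> adj (Q (\<sigma> i) m) (Q (\<sigma> (Suc i mod N)) m)"
  unfolding adj_iff Hedges_def by (rule disjI1, rule UnI2) auto

lemma adj_cycle_mod: "adj (Q (\<sigma> (k mod N)) m) (Q (\<sigma> (Suc k mod N)) m)"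
  using adj_cycle[of "k mod N"] N_pos by (simp add: mod_Suc_eq)

lemma T_in_VV: "T c a xs \<in> VV \<longleftrightarrow> a \<in> V \<and> length xs \<le> s"
  unfolding Hverts_def by auto

lemma P_in_VV: "P c e j \<in> VV \<longleftrightarrow> e \<in> A \<and> 1 \<le> j \<and> j \<le> 2 * l \<and> ((j = l \<or> j = Suc l) \<longrightarrow> c)"
  unfolding Hverts_def by (cases e) auto

lemma Q_in_VV: "Q a i \<in> VV \<longleftrightarrow> a \<in> V \<and> 1 \<le> i \<and> i \<le> m"
  unfolding Hverts_def by auto

lemmas in_VV_iff = T_in_VV P_in_VV Q_in_VV

lemma pnode_in_VV: "e \<in> A \<Longrightarrow> j \<le> Suc (2 * l) \<Longrightarrow> pn c e j \<in> VV"
proof -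
  assume e: "e \<in> A" and j: "j \<le> Suc (2 * l)"
  consider "j = 0" | "j = Suc (2 * l)" | "1 \<le> j \<and> j \<le> 2 * l" using j by linarith
  then show ?thesis
    using arc_ends_in[OF e] outl_length[OF e] inl_length[OF e]
    by cases (simp_all add: pnode_0 pnode_last pnode_inner T_in_VV P_in_VV e)
qed

lemma qnode_in_VV: "a \<in> V \<Longrightarrow> i \<le> m \<Longrightarrow> qnode a i \<in> VV"
  by (cases "i = 0") (auto simp: qnode_0 qnode_pos in_VV_iff)

lemma adj_in_VV: "adj x y \<Longrightarrow> x \<in> VV"
  unfolding adj_iff edge_iff using \<sigma>_in m_pos N_pos
  by (auto simp: pnode_in_VV qnode_in_VV in_VV_iff)

lemma neighbour_T:
  assumes "adj (T c a ys) w"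
  shows "(ys \<noteq> [] \<and> w = T c a (butlast ys)) \<or> (\<exists>b. w = T c a (ys @ [b]) \<and> length ys < s) \<or>
    (c \<and> ys = [] \<and> w = Q a 1) \<or>
    (\<exists>e. e \<in> A \<and> fst e = a \<and> ys = outl a e \<and> w = pn c e 1) \<or>
    (\<exists>e. e \<in> A \<and> snd e = a \<and> ys = inl a e \<and> w = pn c e (2 * l))"
  using assms m_pos unfolding adj_iff edge_iff
  apply (elim disjE exE conjE)
         apply (simp_all add: node_eqs qnode_pos)
  apply (metis prod.collapse)+
  done

lemma neighbour_Q:
  assumes "adj (Q a i) w" "i < m"
  shows "w = qnode a (i - 1) \<or> w = Q a (Suc i)"
  using assms unfolding adj_iff edge_iff
  by (elim disjE exE conjE) (auto simp: node_eqs qnode_pos)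

lemma neighbour_P:
  assumes "adj (P c e j) w"
  shows "\<exists>c'. c = (c' \<or> j = l \<or> j = Suc l) \<and> e \<in> A \<and> 1 \<le> j \<and> j \<le> 2 * l \<and>
     (w = pn c' e (Suc j) \<or> w = pn c' e (j - 1))"
  using assms unfolding adj_iff edge_iff
  by (elim disjE exE conjE) (simp_all add: node_eqs, blast+)

lemma rtranclp_chain: "(\<And>i. i < n \<Longrightarrow> R (f i) (f (Suc i))) \<Longrightarrow> R\<^sup>*\<^sup>* (f 0) (f n)"
  by (induction n) (auto intro: rtranclp.rtrancl_into_rtrancl)

lemma walk_sym: "adj\<^sup>*\<^sup>* x y \<Longrightarrow> adj\<^sup>*\<^sup>* y x"
  using symp_rtranclp[of adj] adj_sym by (auto simp: symp_def)

lemma walk_tree: "a \<in> V \<Longrightarrow> length xs \<le> s \<Longrightarrow> adj\<^sup>*\<^sup>* (T c a []) (T c a xs)"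
  using rtranclp_chain[of "length xs" adj "\<lambda>i. T c a (take i xs)"]
  by (simp add: adj_tree take_Suc_conv_app_nth)

lemma walk_qpath: "a \<in> V \<Longrightarrow> i \<le> m \<Longrightarrow> adj\<^sup>*\<^sup>* (qnode a 0) (qnode a i)"
  using rtranclp_chain[of i adj "qnode a"] by (simp add: adj_qpath)

lemma walk_path: "e \<in> A \<Longrightarrow> j \<le> Suc (2 * l) \<Longrightarrow> adj\<^sup>*\<^sup>* (pn c e 0) (pn c e j)"
  using rtranclp_chain[of j adj "pn c e"] by (simp add: adj_path)

lemma walk_cycle: "i < N \<Longrightarrow> adj\<^sup>*\<^sup>* (Q (\<sigma> 0) m) (Q (\<sigma> i) m)"
proof -
  assume "i < N"
  then have "adj (Q (\<sigma> k) m) (Q (\<sigma> (Suc k)) m)" if "k < i" for k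
    using adj_cycle[of k] that by simp
  then show ?thesis using rtranclp_chain[of i adj "\<lambda>i. Q (\<sigma> i) m"] by simp
qed

abbreviation "q0 \<equiv> Q (\<sigma> 0) m"

lemma q0_in_VV: "q0 \<in> VV"
  using \<sigma>_in N_pos m_pos by (simp add: in_VV_iff)

lemma walk_root1: "a \<in> V \<Longrightarrow> adj\<^sup>*\<^sup>* q0 (T True a [])"
proof -
  assume a: "a \<in> V"
  have "adj\<^sup>*\<^sup>* q0 (Q a m)" using walk_cycle[OF idx_less[OF a]] a by simp
  moreover have "adj\<^sup>*\<^sup>* (Q a m) (T True a [])"
    using walk_sym[OF walk_qpath[OF a, of m]] m_pos by (simp add: qnode_0 qnode_pos)
  ultimately show ?thesis by (rule rtranclp_trans)
qed

text \<open>The tree \<open>T_2(a)\<close> is reached through the shared middle edge of a path leaving \<open>a\<close>.\<close>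
lemma walk_root2: "a \<in> V \<Longrightarrow> adj\<^sup>*\<^sup>* q0 (T False a [])"
proof -
  assume a: "a \<in> V"
  obtain b where e: "(a, b) \<in> A" using out_arc[OF a] by blast
  let ?e = "(a, b)"
  have "adj\<^sup>*\<^sup>* (T True a []) (pn True ?e 0)"
    using walk_tree[OF a, of "outl a ?e"] outl_length[OF e] by (simp add: pnode_0)
  moreover have "adj\<^sup>*\<^sup>* (pn True ?e 0) (pn False ?e l)"
    using walk_path[OF e, of l True] l_ge_2 by (simp add: pnode_inner)
  moreover have "adj\<^sup>*\<^sup>* (pn False ?e l) (T False a [])"
    using walk_sym[OF walk_path[OF e, of l False]]
      walk_sym[OF walk_tree[OF a, of "outl a ?e" False]] outl_length[OF e]
    by (simp add: pnode_0)
  ultimately show ?thesis using walk_root1[OF a] by (meson rtranclp_trans)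
qed

lemma walk_from_q0: "x \<in> VV \<Longrightarrow> adj\<^sup>*\<^sup>* q0 x"
proof (cases x)
  case (T c a xs)
  moreover assume "x \<in> VV"
  ultimately have "a \<in> V" "length xs \<le> s" by (auto simp: in_VV_iff)
  then have "adj\<^sup>*\<^sup>* q0 (T c a [])" and "adj\<^sup>*\<^sup>* (T c a []) (T c a xs)"
    using walk_root1 walk_root2 walk_tree by (cases c; simp)+
  then show ?thesis using T by (meson rtranclp_trans)
next
  case (P c e j)
  moreover assume "x \<in> VV"
  ultimately have e: "e \<in> A" and j: "1 \<le> j" "j \<le> 2 * l" and x: "x = pn c e j"
    by (auto simp: in_VV_iff pnode_inner)
  have "adj\<^sup>*\<^sup>* q0 (T c (fst e) [])"
    using walk_root1 walk_root2 arc_ends_in[OF e] by (cases c) auto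
  moreover have "adj\<^sup>*\<^sup>* (T c (fst e) []) (pn c e 0)"
    using walk_tree arc_ends_in[OF e] outl_length[OF e] by (simp add: pnode_0)
  ultimately show ?thesis using walk_path[OF e, of j c] j x by (meson le_SucI rtranclp_trans)
next
  case (Q a i)
  moreover assume "x \<in> VV"
  ultimately show ?thesis using walk_root1 walk_qpath[of a i]
    by (auto simp: in_VV_iff qnode_0 qnode_pos intro: rtranclp_trans)
qed

lemma finite_VV: "finite VV"
proof -
  let ?Ts = "(\<lambda>(c, a, xs). T c a xs) ` (UNIV \<times> V \<times> {xs. length xs \<le> s})"
  let ?Ps = "(\<lambda>(c, e, j). P c e j) ` (UNIV \<times> A \<times> {..2 * l})"
  let ?Qs = "(\<lambda>(a, i). Q a i) ` (V \<times> {..m})"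
  have "finite {xs :: bool list. length xs \<le> s}"
    using finite_lists_length_le[of "UNIV :: bool set" s] by simp
  moreover have "finite A"
    using finite_V arcs_in by (meson finite_SigmaI finite_subset)
  ultimately have "finite (?Ts \<union> ?Ps \<union> ?Qs)"
    using finite_V by (simp add: finite_cartesian_product)
  moreover have "T c a xs \<in> ?Ts" if "a \<in> V" "length xs \<le> s" for c a xs
    using that by (intro image_eqI[where x = "(c, a, xs)"]) auto
  moreover have "P c e j \<in> ?Ps" if "e \<in> A" "j \<le> 2 * l" for c e j
    using that by (intro image_eqI[where x = "(c, e, j)"]) auto
  moreover have "Q a i \<in> ?Qs" if "a \<in> V" "i \<le> m" for a i
    using that by (intro image_eqI[where x = "(a, i)"]) auto
  ultimately show ?thesis
    unfolding Hverts_def by (elim finite_subset[rotated]) blast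
qed

end

sublocale H_graph \<subseteq> cops_graph "Hverts s l m V A" "Hadj s l m V A inl outl \<sigma>"
proof
  show "adj x y \<Longrightarrow> adj y x" for x y by (rule adj_sym)
  show "adj x y \<Longrightarrow> x \<in> VV" for x y by (rule adj_in_VV)
  show "x \<in> VV \<Longrightarrow> y \<in> VV \<Longrightarrow> adj\<^sup>*\<^sup>* x y" for x y
    using walk_from_q0 walk_sym by (meson rtranclp_trans)
qed (rule finite_VV)

section \<open>Retractions\<close>

fun fold_copy :: "'v hvert \<Rightarrow> 'v hvert" where
  "fold_copy (T c a xs) = T True a xs"
| "fold_copy (P c e j) = P True e j"
| "fold_copy (Q a i) = Q a i"

lemma in_copy1_fold_copy: "in_copy1 (fold_copy x)"
  by (cases x) auto

lemma fold_copy_id: "in_copy1 x \<Longrightarrow> fold_copy x = x"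
  by (cases x) auto

context H_graph
begin

lemma fold_copy_pnode: "j \<le> Suc (2 * l) \<Longrightarrow> fold_copy (pn c e j) = pn True e j"
  by (auto simp: pnode_def)

lemma fold_copy_qnode: "fold_copy (qnode a i) = qnode a i"
  by (auto simp: qnode_def)

lemma fold_copy_in_VV: "x \<in> VV \<Longrightarrow> fold_copy x \<in> VV"
  by (cases x) (auto simp: in_VV_iff)

lemma adj_fold_copy: "adj x y \<Longrightarrow> adj (fold_copy x) (fold_copy y)"
proof -
  have "adj (fold_copy x) (fold_copy y)" if "(x, y) \<in> E" for x y
    using that unfolding edge_iff
    by (elim disjE exE conjE)
      (simp_all add: adj_tree adj_path adj_qpath adj_cycle fold_copy_pnode fold_copy_qnode)
  then show "adj x y \<Longrightarrow> adj (fold_copy x) (fold_copy y)" using adj_sym adj_iff by metis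
qed

lemma near_fold_copy: "near adj r r' \<Longrightarrow> near adj (fold_copy r) (fold_copy r')"
  using adj_fold_copy by (auto simp: rob_step_def)

definition cycle_gap :: "'v \<times> 'v \<Rightarrow> nat" where
  "cycle_gap e = (idx (snd e) + N - idx (fst e)) mod N"

definition detour_length :: "'v \<times> 'v \<Rightarrow> nat" where
  "detour_length e = 2 * s + 2 * m + cycle_gap e"

text \<open>The walk from the leaf of \<open>T(a)\<close> to the leaf of \<open>T(b)\<close> for \<open>e = (a, b)\<close> that stays in the
  core: up the tree, along \<open>Q(a)\<close>, forward along \<open>C\<close> and down through \<open>Q(b)\<close> and \<open>T(b)\<close>.\<close>
definition detour :: "'v \<times> 'v \<Rightarrow> nat \<Rightarrow> 'v hvert" where
  "detour e t = (let a = fst e; b = snd e; d = cycle_gap e in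
     if t \<le> s then T True a (take (s - t) (outl a e))
     else if t \<le> s + m then Q a (t - s)
     else if t \<le> s + m + d then Q (\<sigma> ((idx a + (t - (s + m))) mod N)) m
     else if t < s + 2 * m + d then Q b (s + 2 * m + d - t)
     else T True b (take (t - (s + 2 * m + d)) (inl b e)))"

lemma cycle_gap_less: "cycle_gap e < N"
  unfolding cycle_gap_def using N_pos by simp

lemma idx_add_cycle_gap: "e \<in> A \<Longrightarrow> (idx (fst e) + cycle_gap e) mod N = idx (snd e)"
proof -
  assume "e \<in> A"
  then have a: "idx (fst e) < N" and b: "idx (snd e) < N" using arc_ends_in idx_less by auto
  have "(idx (fst e) + cycle_gap e) mod N = (idx (fst e) + (idx (snd e) + N - idx (fst e))) mod N"
    unfolding cycle_gap_def by (simp add: mod_add_right_eq)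
  also have "idx (fst e) + (idx (snd e) + N - idx (fst e)) = idx (snd e) + N" using a by simp
  finally show ?thesis using b by simp
qed

text \<open>This is where \<open>l\<close> has to be large: the detour is not longer than the path \<open>P(e)\<close>.\<close>
lemma detour_length_le: "detour_length e \<le> Suc (2 * l)"
  using cycle_gap_less[of e] l_large unfolding detour_length_def by linarith

lemma detour_tree_out: "t \<le> s \<Longrightarrow> detour e t = T True (fst e) (take (s - t) (outl (fst e) e))"
  by (simp add: detour_def Let_def)

lemma detour_qpath_out: "s \<le> t \<Longrightarrow> t \<le> s + m \<Longrightarrow> detour e t = qnode (fst e) (t - s)"
  by (cases "t = s") (simp_all add: detour_def Let_def qnode_def)

lemma detour_cycle:
  assumes "s + m \<le> t" "t \<le> s + m + cycle_gap e" and e: "e \<in> A"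
  shows "detour e t = Q (\<sigma> ((idx (fst e) + (t - (s + m))) mod N)) m"
proof (cases "t = s + m")
  case True
  then show ?thesis
    using idx_less arc_ends_in[OF e] s_pos m_pos by (simp add: detour_def Let_def)
next
  case False
  then show ?thesis using assms(1,2) by (simp add: detour_def Let_def)
qed

lemma detour_qpath_in:
  assumes lo: "s + m + cycle_gap e \<le> t" and hi: "t \<le> s + 2 * m + cycle_gap e" and e: "e \<in> A"
  shows "detour e t = qnode (snd e) (s + 2 * m + cycle_gap e - t)"
proof -
  let ?a = "fst e" and ?b = "snd e" and ?d = "cycle_gap e"
  have ab: "?a \<in> V" "?b \<in> V" using arc_ends_in[OF e] by auto
  have gap: "(idx ?a + ?d) mod N = idx ?b" by (rule idx_add_cycle_gap[OF e])
  consider "t = s + m + ?d" | "s + m + ?d < t" "t < s + 2 * m + ?d" | "t = s + 2 * m + ?d"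
    using lo hi by linarith
  then show ?thesis
  proof cases
    case 1
    show ?thesis
    proof (cases "?d = 0")
      case True
      then have "idx ?a = idx ?b" using gap idx_less[OF ab(1)] by simp
      then have "?a = ?b" using ab by (metis \<sigma>_idx)
      then show ?thesis using 1 True m_pos by (simp add: detour_def Let_def qnode_def)
    next
      case False
      then show ?thesis using 1 gap ab m_pos by (simp add: detour_def Let_def qnode_def)
    qed
  next
    case 2
    then show ?thesis by (simp add: detour_def Let_def qnode_def)
  next
    case 3
    then show ?thesis using m_pos by (simp add: detour_def Let_def qnode_def)
  qed
qed

lemma detour_tree_in: "s + 2 * m + cycle_gap e \<le> t \<Longrightarrow>
    detour e t = T True (snd e) (take (t - (s + 2 * m + cycle_gap e)) (inl (snd e) e))"
  using s_pos m_pos by (auto simp: detour_def Let_def)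

lemma detour_0: "e \<in> A \<Longrightarrow> detour e 0 = T True (fst e) (outl (fst e) e)"
  using outl_length[of e] by (simp add: detour_tree_out)

lemma detour_end: "e \<in> A \<Longrightarrow> detour e (detour_length e) = T True (snd e) (inl (snd e) e)"
  using inl_length[of e] by (simp add: detour_tree_in detour_length_def)

lemma adj_tree_take: "a \<in> V \<Longrightarrow> k < length xs \<Longrightarrow> length xs \<le> s \<Longrightarrow>
    adj (T c a (take k xs)) (T c a (take (Suc k) xs))"
  using adj_tree[of a "take k xs"] by (simp add: take_Suc_conv_app_nth)

lemma adj_detour: assumes e: "e \<in> A" and t: "t < detour_length e"
  shows "adj (detour e t) (detour e (Suc t))"
proof -
  let ?a = "fst e" and ?b = "snd e" and ?d = "cycle_gap e"
  have ab: "?a \<in> V" "?b \<in> V" using arc_ends_in[OF e] by auto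
  have len: "length (outl ?a e) = s" "length (inl ?b e) = s"
    using outl_length[OF e] inl_length[OF e] by auto
  consider "t < s" | "s \<le> t" "t < s + m" | "s + m \<le> t" "t < s + m + ?d"
    | "s + m + ?d \<le> t" "t < s + 2 * m + ?d" | "s + 2 * m + ?d \<le> t"
    by linarith
  then show ?thesis
  proof cases
    case 1
    then have "s - t = Suc (s - Suc t)" by simp
    then show ?thesis using 1 adj_tree_take[OF ab(1), of "s - Suc t" "outl ?a e"] len adj_sym
      by (simp add: detour_tree_out)
  next
    case 2
    then show ?thesis using adj_qpath[OF ab(1), of "t - s"] by (simp add: detour_qpath_out Suc_diff_le)
  next
    case 3
    then show ?thesis using adj_cycle_mod[of "idx ?a + (t - (s + m))"] e
      by (simp add: detour_cycle Suc_diff_le)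
  next
    case 4
    then have "s + 2 * m + ?d - t = Suc (s + 2 * m + ?d - Suc t)" by simp
    then show ?thesis using 4 adj_qpath[OF ab(2), of "s + 2 * m + ?d - Suc t"] e adj_sym
      by (simp add: detour_qpath_in)
  next
    case 5
    then show ?thesis
      using t adj_tree_take[OF ab(2), of "t - (s + 2 * m + ?d)" "inl ?b e"] len
      by (simp add: detour_tree_in detour_length_def Suc_diff_le)
  qed
qed

lemma detour_in_core: "in_core (detour e t)"
  by (simp add: detour_def Let_def)

lemma detour_in_VV: "e \<in> A \<Longrightarrow> detour e t \<in> VV"
  using arc_ends_in[of e] outl_length[of e] inl_length[of e] m_pos \<sigma>_in[OF mod_less_divisor[OF N_pos]]
  by (simp add: detour_def Let_def in_VV_iff) linarith

fun core_retract :: "'v hvert \<Rightarrow> 'v hvert" where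
  "core_retract (T c a xs) = T True a xs"
| "core_retract (P c e j) = detour e (min j (detour_length e))"
| "core_retract (Q a i) = Q a i"

lemma in_core_core_retract: "in_core (core_retract x)"
  by (cases x) (simp_all add: detour_in_core)

lemma core_retract_in_VV: "x \<in> VV \<Longrightarrow> core_retract x \<in> VV"
  by (cases x) (auto simp: in_VV_iff detour_in_VV)

lemma core_retract_fold_copy: "core_retract (fold_copy x) = core_retract x"
  by (cases x) simp_all

lemma core_retract_id: "in_core x \<Longrightarrow> core_retract x = x"
  by (cases x) simp_all

lemma core_retract_eq_fold_copy: "in_core (fold_copy r) \<Longrightarrow> core_retract r = fold_copy r"
  using core_retract_fold_copy core_retract_id by metis

lemma core_retract_pnode: "e \<in> A \<Longrightarrow> j \<le> Suc (2 * l) \<Longrightarrow>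
    core_retract (pn c e j) = detour e (min j (detour_length e))"
  using detour_0[of e] detour_end[of e] detour_length_le[of e]
  by (cases "j = 0 \<or> j = Suc (2 * l)") (auto simp: pnode_0 pnode_last pnode_inner min_absorb2)

lemma core_retract_qnode: "core_retract (qnode a i) = qnode a i"
  by (simp add: qnode_def)

lemma adj_core_retract: "adj x y \<Longrightarrow> near adj (core_retract x) (core_retract y)"
proof -
  have "near adj (core_retract x) (core_retract y)" if "(x, y) \<in> E" for x y
    using that unfolding edge_iff
  proof (elim disjE exE conjE)
    fix c e j assume xy: "x = pn c e j" "y = pn c e (Suc j)" and e: "e \<in> A" and j: "j \<le> 2 * l"
    then show ?thesis
      using adj_detour[OF e, of j] by (cases "j < detour_length e") (auto simp: core_retract_pnode rob_step_def)
  qed (simp_all add: adj_tree adj_qpath adj_cycle core_retract_qnode rob_step_def)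
  then show "adj x y \<Longrightarrow> near adj (core_retract x) (core_retract y)"
    using near_sym adj_iff by metis
qed

lemma near_core_retract: "near adj r r' \<Longrightarrow> near adj (core_retract r) (core_retract r')"
  using adj_core_retract by (auto simp: rob_step_def)

definition owner :: "'v hvert \<Rightarrow> 'v" where
  "owner v = (case v of T c a xs \<Rightarrow> a | P c e j \<Rightarrow> if j < l then fst e else snd e | Q a i \<Rightarrow> a)"

lemma owner_simps [simp]:
  "owner (T c a xs) = a" "owner (P c e j) = (if j < l then fst e else snd e)" "owner (Q a i) = a"
  by (simp_all add: owner_def)

lemma owner_qnode [simp]: "owner (qnode a i) = a"
  by (simp add: qnode_def)

lemma owner_in_V: "x \<in> VV \<Longrightarrow> owner x \<in> V"
  by (cases x) (auto simp: in_VV_iff dest: arc_ends_in)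

lemma not_in_core_pnode: "1 \<le> j \<Longrightarrow> j \<le> 2 * l \<Longrightarrow> \<not> in_core (pn c e j)"
  by (simp add: pnode_inner)

lemma adj_in_core:
  assumes "adj u w" "in_core u" "in_core w"
  shows "owner w = owner u \<or> (\<exists>i<N. u = Q (\<sigma> i) m \<and> w = Q (\<sigma> (Suc i mod N)) m \<or>
    w = Q (\<sigma> i) m \<and> u = Q (\<sigma> (Suc i mod N)) m)"
proof -
  have path: "\<not> (in_core (pn c e j) \<and> in_core (pn c e (Suc j)))" if "j \<le> 2 * l" for c e j
    using that l_ge_2 by (cases j) (simp_all add: pnode_inner)
  have "owner y = owner x \<or> (\<exists>i<N. x = Q (\<sigma> i) m \<and> y = Q (\<sigma> (Suc i mod N)) m)"
    if "(x, y) \<in> E" "in_core x" "in_core y" for x y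
    using that unfolding edge_iff by (elim disjE exE conjE) (auto dest: path)
  then show ?thesis using assms unfolding adj_iff by metis
qed

definition on_cycle :: "'v hvert \<Rightarrow> bool" where
  "on_cycle v \<longleftrightarrow> (\<exists>a. v = Q a m)"

definition cycle_retract :: "'v hvert \<Rightarrow> 'v hvert" where
  "cycle_retract v = Q (owner (core_retract v)) m"

lemma cycle_retract_on_cycle: "on_cycle (core_retract r) \<Longrightarrow> cycle_retract r = core_retract r"
  by (auto simp: on_cycle_def cycle_retract_def)

lemma cycle_retract_in_VV: "r \<in> VV \<Longrightarrow> cycle_retract r \<in> VV"
  using owner_in_V core_retract_in_VV m_pos by (simp add: cycle_retract_def in_VV_iff)

definition cycle_pos :: "'v hvert \<Rightarrow> nat" where
  "cycle_pos r = idx (owner (core_retract r))"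

lemma cycle_pos_less: "r \<in> VV \<Longrightarrow> cycle_pos r < N"
  unfolding cycle_pos_def using owner_in_V core_retract_in_VV idx_less by blast

lemma cycle_retract_pos: "r \<in> VV \<Longrightarrow> cycle_retract r = Q (\<sigma> (cycle_pos r)) m"
  unfolding cycle_pos_def cycle_retract_def using owner_in_V core_retract_in_VV by simp

lemma cycle_pos_step:
  assumes "near adj r r'"
  shows "cycle_pos r' = cycle_pos r \<or> cycle_pos r' = Suc (cycle_pos r) mod N \<or>
    cycle_pos r = Suc (cycle_pos r') mod N"
proof -
  have "near adj (core_retract r) (core_retract r')" using assms by (rule near_core_retract)
  then consider "core_retract r' = core_retract r" | "adj (core_retract r) (core_retract r')"
    by (auto simp: rob_step_def)
  then show ?thesis
  proof cases
    case 2
    from adj_in_core[OF this in_core_core_retract in_core_core_retract] show ?thesis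
      unfolding cycle_pos_def by auto
  qed (simp add: cycle_pos_def)
qed

lemma near_cycle_retract:
  assumes "r \<in> VV" "near adj r r'"
  shows "near adj (cycle_retract r) (cycle_retract r')"
proof -
  have "r' \<in> VV" using near_in assms by blast
  then show ?thesis
    using cycle_pos_step[OF assms(2)] cycle_retract_pos assms(1) cycle_pos_less adj_cycle adj_sym
    by (auto simp: rob_step_def)
qed
end

section \<open>The four phases\<close>

fun tree_word :: "'v hvert \<Rightarrow> bool list" where
  "tree_word (T c a xs) = xs" | "tree_word (P c e j) = []" | "tree_word (Q a i) = []"

fun path_index :: "'v hvert \<Rightarrow> nat" where
  "path_index (P c e j) = j" | "path_index (T c a xs) = 0" | "path_index (Q a i) = 0"

context H_graph
begin

lemma rooted_paths_cycle:
  "rooted_paths {Q (\<sigma> i) m | i. i < N} (\<lambda>x. idx (owner x)) (\<lambda>x k. Q (\<sigma> k) m)"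
  unfolding rooted_paths_def
proof (intro ballI conjI allI impI)
  fix x assume "x \<in> {Q (\<sigma> i) m | i. i < N}"
  then obtain i where x: "x = Q (\<sigma> i) m" "i < N" by blast
  then show "Q (\<sigma> (idx (owner x))) m = x" by simp
  fix k
  show "adj (Q (\<sigma> k) m) (Q (\<sigma> (Suc k)) m)" if "k < idx (owner x)"
    using that x adj_cycle[of k] by simp
  assume k: "k \<le> idx (owner x)"
  then show "Q (\<sigma> k) m \<in> VV" using x \<sigma>_in m_pos by (simp add: in_VV_iff)
  show "idx (owner (Q (\<sigma> k) m)) = k" using x k by simp
qed simp

lemma cycle_move:
  assumes r: "r \<in> VV" and step: "near adj r r'"
  shows "near adj q0 (cycle_retract r') \<or> cycle_retract r' \<in> {Q (\<sigma> i) m | i. i < N} \<and>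
    tree_step (\<lambda>x. idx (owner x)) (\<lambda>x k. Q (\<sigma> k) m) (cycle_retract r) (cycle_retract r')"
proof -
  have r': "r' \<in> VV" using near_in step r by blast
  let ?j = "cycle_pos r" and ?j' = "cycle_pos r'"
  have j: "?j < N" "?j' < N" using cycle_pos_less r r' by auto
  have pos: "cycle_retract r = Q (\<sigma> ?j) m" "cycle_retract r' = Q (\<sigma> ?j') m"
    using cycle_retract_pos r r' by auto
  have "near adj q0 (Q (\<sigma> ?j') m) \<or> ?j' = ?j \<or> 0 < ?j \<and> ?j' = ?j - 1 \<or> 0 < ?j' \<and> ?j = ?j' - 1"
  proof -
    consider "?j' = ?j" | "?j' = Suc ?j mod N" | "?j = Suc ?j' mod N"
      using cycle_pos_step[OF step] by blast
    then show ?thesis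
    proof cases
      case 2
      then show ?thesis using j by (cases "Suc ?j = N") auto
    next
      case 3
      show ?thesis
      proof (cases "Suc ?j' = N")
        case True
        then have "adj (Q (\<sigma> ?j') m) q0" using adj_cycle[of ?j'] j by simp
        then show ?thesis using adj_sym by (auto simp: rob_step_def)
      qed (use 3 j in auto)
    qed simp
  qed
  then show ?thesis using pos j by (auto simp: tree_step_def)
qed

text \<open>The first cop stays on \<open>q0\<close>, which cuts \<open>C\<close> into a path rooted at \<open>q0\<close>.\<close>
lemma catch_cycle_shadow: "r \<in> VV \<Longrightarrow> can_force adj (shadow_caught cycle_retract) q0 q0 r"
  by (rule can_force_descent[OF rooted_paths_cycle, where g = "\<lambda>_. q0" and h = cycle_retract])
    (use cycle_move cycle_retract_pos cycle_pos_less q0_in_VV in auto)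

definition core_depth :: "'v hvert \<Rightarrow> nat" where
  "core_depth x = (case x of T c a xs \<Rightarrow> m + length xs | P c e j \<Rightarrow> 0 | Q a i \<Rightarrow> m - i)"

definition core_branch :: "'v hvert \<Rightarrow> nat \<Rightarrow> 'v hvert" where
  "core_branch x k = (if k \<le> m then qnode (owner x) (m - k)
     else T True (owner x) (take (k - m) (tree_word x)))"

abbreviation "core_trees \<equiv> {x \<in> VV. in_core x \<and> \<not> on_cycle x}"

lemma core_depth_simps [simp]: "core_depth (T c a xs) = m + length xs" "core_depth (Q a i) = m - i"
  by (simp_all add: core_depth_def)

lemma core_depth_qnode: "i \<le> m \<Longrightarrow> core_depth (qnode a i) = m - i"
  by (simp add: qnode_def)

lemma core_branch_low: "k \<le> m \<Longrightarrow> core_branch x k = qnode (owner x) (m - k)"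
  by (simp add: core_branch_def)

lemma core_branch_tree: "m \<le> k \<Longrightarrow>
    core_branch x k = T True (owner x) (take (k - m) (tree_word x))"
  by (cases "k = m") (simp_all add: core_branch_def qnode_def)

lemma core_trees_cases:
  assumes "x \<in> core_trees"
  obtains a xs where "x = T True a xs" "a \<in> V" "length xs \<le> s"
  | a i where "x = Q a i" "a \<in> V" "1 \<le> i" "i < m"
  using assms by (cases x) (auto simp: in_VV_iff on_cycle_def)

lemma rooted_paths_core: "rooted_paths core_trees core_depth core_branch"
  unfolding rooted_paths_def
proof (intro ballI)
  fix x assume "x \<in> core_trees"
  then show "core_branch x (core_depth x) = x \<and>
    (\<forall>k < core_depth x. adj (core_branch x k) (core_branch x (Suc k))) \<and>
    (\<forall>k \<le> core_depth x. core_branch x k \<in> VV \<and> core_depth (core_branch x k) = k \<and>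
      (\<forall>j \<le> k. core_branch (core_branch x k) j = core_branch x j))"
  proof (cases rule: core_trees_cases)
    case (1 a xs)
    have step: "adj (core_branch x k) (core_branch x (Suc k))" if "k < m + length xs" for k
    proof (cases "k < m")
      case True
      then show ?thesis using adj_qpath[OF 1(2), of "m - Suc k"] adj_sym 1(1)
        by (simp add: core_branch_low Suc_diff_Suc)
    next
      case False
      then show ?thesis using adj_tree_take[OF 1(2), of "k - m" xs True] 1 that
        by (simp add: core_branch_tree Suc_diff_le)
    qed
    have branch: "core_branch x k \<in> VV \<and> core_depth (core_branch x k) = k \<and>
        (\<forall>j \<le> k. core_branch (core_branch x k) j = core_branch x j)" if "k \<le> m + length xs" for k
    proof (cases "k \<le> m")
      case True
      then show ?thesis using 1 by (simp add: core_branch_low qnode_in_VV core_depth_qnode)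
    next
      case False
      have "core_branch (core_branch x k) j = core_branch x j" if "j \<le> k" for j
        using that False 1(1) by (cases "j \<le> m") (simp_all add: core_branch_low core_branch_tree)
      then show ?thesis using False 1 \<open>k \<le> m + length xs\<close>
        by (simp add: core_branch_tree T_in_VV)
    qed
    show ?thesis using 1 step branch by (simp add: core_branch_tree)
  next
    case (2 a i)
    have "adj (Q a (m - k)) (Q a (m - Suc k))" if "k < m - i" for k
      using adj_qpath[OF 2(2), of "m - Suc k"] adj_sym that 2 by (simp add: qnode_pos Suc_diff_Suc)
    then show ?thesis using 2
      by (auto simp: core_branch_low core_depth_qnode qnode_pos Q_in_VV)
  qed
qed

lemma core_tree_step:
  assumes "adj u w" "u \<in> core_trees" "w \<in> core_trees"
  shows "tree_step core_depth core_branch u w"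
  using assms(2)
proof (cases rule: core_trees_cases)
  case (1 a ys)
  have parent: "core_branch u (core_depth u - 1) = T True a (butlast ys)" if "ys \<noteq> []"
  proof -
    have "m \<le> m + length ys - 1" using that by (cases ys) auto
    then show ?thesis using 1(1) by (simp add: core_branch_tree butlast_conv_take)
  qed
  have child: "u = core_branch w (core_depth w - 1)" if "w = T True a (ys @ [b])" for b
    using that 1(1) by (simp add: core_branch_tree)
  have root: "core_branch u (core_depth u - 1) = Q a 1" if "ys = []"
    using that 1(1) m_pos by (simp add: core_branch_low qnode_pos)
  from neighbour_T[OF assms(1)[unfolded 1(1)]] show ?thesis
  proof (elim disjE exE conjE)
    fix e assume "w = pn True e 1"
    then show ?thesis using assms(3) l_ge_2 not_in_core_pnode[of 1] by auto
  next
    fix e assume "w = pn True e (2 * l)"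
    then show ?thesis using assms(3) l_ge_2 not_in_core_pnode[of "2 * l"] by auto
  qed (use parent child root 1(1) m_pos in \<open>auto simp: tree_step_def\<close>)
next
  case (2 a i)
  have child: "0 < core_depth (qnode a (i - 1)) \<and>
      u = core_branch (qnode a (i - 1)) (core_depth (qnode a (i - 1)) - 1)"
    using 2 by (simp add: core_depth_qnode core_branch_low qnode_pos)
  have parent: "core_branch u (core_depth u - 1) = Q a (Suc i)"
    using 2 by (simp add: core_branch_low qnode_pos Suc_diff_Suc)
  from neighbour_Q[OF assms(1)[unfolded 2(1)] 2(4)] show ?thesis
    using 2 child parent by (auto simp: tree_step_def)
qed

lemma core_move:
  assumes r: "r \<in> VV" and step: "near adj r r'" and "core_retract r \<in> core_trees"
  shows "near adj (cycle_retract r) (core_retract r') \<or>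
    core_retract r' \<in> core_trees \<and> tree_step core_depth core_branch (core_retract r) (core_retract r')"
proof (cases "on_cycle (core_retract r')")
  case True
  then show ?thesis using near_cycle_retract[OF r step] cycle_retract_on_cycle by simp
next
  case False
  have "r' \<in> VV" using near_in step r by blast
  then have "core_retract r' \<in> core_trees"
    using False core_retract_in_VV in_core_core_retract by blast
  moreover have "tree_step core_depth core_branch (core_retract r) (core_retract r')"
    using near_core_retract[OF step] core_tree_step[OF _ assms(3) calculation]
    by (auto simp: rob_step_def tree_step_def)
  ultimately show ?thesis by blast
qed

lemma catch_core_shadow:
  "p1 \<in> VV \<Longrightarrow> p2 \<in> VV \<Longrightarrow> r \<in> VV \<Longrightarrow> near adj p1 (cycle_retract r) \<Longrightarrow>
    can_force adj (shadow_caught core_retract) p1 p2 r"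
  by (rule can_force_refine[OF rooted_paths_core, where g = cycle_retract])
    (use cycle_retract_in_VV near_cycle_retract core_move core_retract_in_VV
      in_core_core_retract cycle_retract_on_cycle in auto)

text \<open>On the root \<open>pn True e 0\<close>, a leaf of \<open>T_1(fst e)\<close>, \<open>path_branch\<close> and \<open>path_index\<close>
  return the root and \<open>0\<close>, as compatibility of the root paths requires.\<close>
fun path_branch :: "'v hvert \<Rightarrow> nat \<Rightarrow> 'v hvert" where
  "path_branch (P c e j) k = pn True e k"
| "path_branch (T c a xs) k = T c a xs"
| "path_branch (Q a i) k = Q a i"

abbreviation "copy1_paths \<equiv> {x \<in> VV. in_copy1 x \<and> \<not> in_core x}"

lemma copy1_paths_cases:
  assumes "x \<in> copy1_paths"
  obtains e j where "x = P True e j" "e \<in> A" "1 \<le> j" "j \<le> 2 * l"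
  using assms by (cases x) (auto simp: in_VV_iff)

lemma path_index_pnode: "j \<le> 2 * l \<Longrightarrow> path_index (pn c e j) = j"
  by (cases "j = 0") (simp_all add: pnode_0 pnode_inner)

lemma rooted_paths_path: "rooted_paths copy1_paths path_index path_branch"
  unfolding rooted_paths_def
proof (intro ballI)
  fix x assume "x \<in> copy1_paths"
  then obtain e j where x: "x = P True e j" "e \<in> A" "1 \<le> j" "j \<le> 2 * l"
    by (rule copy1_paths_cases)
  have "path_branch (pn True e k) i = pn True e i" if "i \<le> k" "k \<le> 2 * l" for i k
    using that by (cases "k = 0") (simp_all add: pnode_0 pnode_inner)
  moreover have "adj (path_branch x k) (path_branch x (Suc k))" if "k < j" for k
    using x that adj_path by simp
  ultimately show "path_branch x (path_index x) = x \<and>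
    (\<forall>k < path_index x. adj (path_branch x k) (path_branch x (Suc k))) \<and>
    (\<forall>k \<le> path_index x. path_branch x k \<in> VV \<and> path_index (path_branch x k) = k \<and>
      (\<forall>i \<le> k. path_branch (path_branch x k) i = path_branch x i))"
    using x by (auto simp: pnode_inner pnode_in_VV path_index_pnode)
qed

lemma path_tree_step:
  assumes "adj u w" "u \<in> copy1_paths" "w \<in> copy1_paths"
  shows "tree_step path_index path_branch u w"
proof -
  obtain e j where u: "u = P True e j" using assms(2) by (rule copy1_paths_cases)
  obtain e' j' where w: "w = P True e' j'" "1 \<le> j'" using assms(3) by (rule copy1_paths_cases)
  from neighbour_P[OF assms(1)[unfolded u]] obtain c' where j: "1 \<le> j" "j \<le> 2 * l"
    and "w = pn c' e (Suc j) \<or> w = pn c' e (j - 1)" by blast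
  then have "e' = e \<and> (j' = Suc j \<or> j' = j - 1)" using w by (auto simp: node_eqs)
  then show ?thesis using u w j by (auto simp: tree_step_def pnode_inner)
qed

lemma path_move:
  assumes r: "r \<in> VV" and step: "near adj r r'" and "fold_copy r \<in> copy1_paths"
  shows "near adj (core_retract r) (fold_copy r') \<or>
    fold_copy r' \<in> copy1_paths \<and> tree_step path_index path_branch (fold_copy r) (fold_copy r')"
proof (cases "in_core (fold_copy r')")
  case True
  then show ?thesis
    using near_core_retract[OF step] core_retract_eq_fold_copy[OF True] by simp
next
  case False
  have "r' \<in> VV" using near_in step r by blast
  then have "fold_copy r' \<in> copy1_paths"
    using False fold_copy_in_VV in_copy1_fold_copy by blast
  moreover have "tree_step path_index path_branch (fold_copy r) (fold_copy r')"
    using near_fold_copy[OF step] path_tree_step[OF _ assms(3) calculation]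
    by (auto simp: rob_step_def tree_step_def)
  ultimately show ?thesis by blast
qed

lemma catch_copy1_shadow:
  "p1 \<in> VV \<Longrightarrow> p2 \<in> VV \<Longrightarrow> r \<in> VV \<Longrightarrow> near adj p1 (core_retract r) \<Longrightarrow>
    can_force adj (shadow_caught fold_copy) p1 p2 r"
  by (rule can_force_refine[OF rooted_paths_path, where g = core_retract])
    (use core_retract_in_VV near_core_retract path_move fold_copy_in_VV in
      \<open>auto simp: in_copy1_fold_copy core_retract_eq_fold_copy\<close>)

definition private_depth :: "'v hvert \<Rightarrow> nat" where
  "private_depth x = (case x of T c a xs \<Rightarrow> length xs
     | P c e j \<Rightarrow> if j < l then s + j else s + (Suc (2 * l) - j) | Q a i \<Rightarrow> 0)"

fun private_branch :: "'v hvert \<Rightarrow> nat \<Rightarrow> 'v hvert" where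
  "private_branch (T c a xs) k = T False a (take k xs)"
| "private_branch (P c e j) k = (if j < l
     then (if k \<le> s then T False (fst e) (take k (outl (fst e) e)) else P False e (k - s))
     else (if k \<le> s then T False (snd e) (take k (inl (snd e) e))
       else P False e (Suc (2 * l) - (k - s))))"
| "private_branch (Q a i) k = Q a i"

abbreviation "copy2_private \<equiv> {x \<in> VV. \<not> in_copy1 x}"

lemma private_depth_simps [simp]:
  "private_depth (T c a xs) = length xs"
  "private_depth (P c e j) = (if j < l then s + j else s + (Suc (2 * l) - j))"
  by (simp_all add: private_depth_def)

lemma copy2_private_cases:
  assumes "x \<in> copy2_private"
  obtains a xs where "x = T False a xs" "a \<in> V" "length xs \<le> s"
  | e j where "x = P False e j" "e \<in> A" "1 \<le> j" "j < l"
  | e j where "x = P False e j" "e \<in> A" "Suc l < j" "j \<le> 2 * l"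
  using assms by (cases x) (auto simp: in_VV_iff, linarith)

lemma pnode_private: "1 \<le> j \<Longrightarrow> j \<le> 2 * l \<Longrightarrow> j \<noteq> l \<Longrightarrow> j \<noteq> Suc l \<Longrightarrow> pn False e j = P False e j"
  by (simp add: pnode_inner)

lemma rooted_paths_private: "rooted_paths copy2_private private_depth private_branch"
  unfolding rooted_paths_def
proof (intro ballI)
  fix x assume "x \<in> copy2_private"
  then show "private_branch x (private_depth x) = x \<and>
    (\<forall>k < private_depth x. adj (private_branch x k) (private_branch x (Suc k))) \<and>
    (\<forall>k \<le> private_depth x. private_branch x k \<in> VV \<and> private_depth (private_branch x k) = k \<and>
      (\<forall>i \<le> k. private_branch (private_branch x k) i = private_branch x i))"
  proof (cases rule: copy2_private_cases)
    case (1 a xs)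
    then show ?thesis by (auto simp: adj_tree_take T_in_VV min_def)
  next
    case (2 e j)
    let ?a = "fst e" and ?L = "outl (fst e) e"
    have a: "?a \<in> V" and L: "length ?L = s" using arc_ends_in outl_length 2 by auto
    have "adj (private_branch x k) (private_branch x (Suc k))" if "k < s + j" for k
    proof -
      consider "k < s" | "k = s" | "s < k" by linarith
      then show ?thesis
      proof cases
        case 1
        then show ?thesis using 2 adj_tree_take[OF a, of k ?L False] L by simp
      next
        case 3
        then show ?thesis using 2 that adj_path[of e "k - s" False] l_ge_2
          by (simp add: pnode_private Suc_diff_le)
      qed (use 2 L adj_path[of e 0 False] l_ge_2 in \<open>simp add: pnode_0 pnode_private\<close>)
    qed
    moreover have "private_branch (private_branch x k) i = private_branch x i" if "i \<le> k" "k \<le> s + j" for i k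
      using that 2 by (cases "k \<le> s") (auto simp: min_def)
    ultimately show ?thesis using 2 a L by (auto simp: T_in_VV P_in_VV)
  next
    case (3 e j)
    let ?b = "snd e" and ?L = "inl (snd e) e"
    have b: "?b \<in> V" and L: "length ?L = s" using arc_ends_in inl_length 3 by auto
    have "adj (private_branch x k) (private_branch x (Suc k))" if "k < s + (Suc (2 * l) - j)" for k
    proof -
      consider "k < s" | "k = s" | "s < k" by linarith
      then show ?thesis
      proof cases
        case 1
        then show ?thesis using 3 adj_tree_take[OF b, of k ?L False] L by simp
      next
        case 2
        then show ?thesis using 3 L adj_path[of e "2 * l" False] l_ge_2 adj_sym
          by (simp add: pnode_last pnode_private)
      next
        case 3
        then have "Suc (2 * l) - (k - s) = Suc (2 * l - (k - s))"
          "Suc (2 * l) - (Suc k - s) = 2 * l - (k - s)" using that \<open>Suc l < j\<close> by auto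
        then show ?thesis using \<open>x = _\<close> \<open>e \<in> A\<close> 3 that adj_path[of e "2 * l - (k - s)" False]
          adj_sym \<open>Suc l < j\<close> \<open>j \<le> 2 * l\<close> by (simp add: pnode_private)
      qed
    qed
    moreover have "private_branch (private_branch x k) i = private_branch x i"
      if "i \<le> k" "k \<le> s + (Suc (2 * l) - j)" for i k
      using that 3 by (cases "k \<le> s") (auto simp: min_def)
    ultimately show ?thesis using 3 b L by (auto simp: T_in_VV P_in_VV)
  qed
qed

lemma private_tree_step:
  assumes "adj u w" "u \<in> copy2_private" "w \<in> copy2_private"
  shows "tree_step private_depth private_branch u w"
  using assms(2)
proof (cases rule: copy2_private_cases)
  case (1 a ys)
  from neighbour_T[OF assms(1)[unfolded 1(1)]] show ?thesis
  proof (elim disjE exE conjE)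
    assume "ys \<noteq> []" "w = T False a (butlast ys)"
    then show ?thesis using 1 by (simp add: tree_step_def butlast_conv_take)
  next
    fix e assume "e \<in> A" "fst e = a" "ys = outl a e" "w = pn False e 1"
    then show ?thesis using 1 l_ge_2 outl_length[of e] by (auto simp: tree_step_def pnode_private)
  next
    fix e assume "e \<in> A" "snd e = a" "ys = inl a e" "w = pn False e (2 * l)"
    then show ?thesis using 1 l_ge_2 inl_length[of e] by (auto simp: tree_step_def pnode_private)
  qed (use 1 in \<open>auto simp: tree_step_def\<close>)
next
  case (2 e j)
  from neighbour_P[OF assms(1)[unfolded 2(1)]] 2
  have "w = pn False e (Suc j) \<or> w = pn False e (j - 1)" by auto
  then show ?thesis
  proof
    assume "w = pn False e (Suc j)"
    then show ?thesis using 2 assms(3) by (cases "Suc j = l") (auto simp: tree_step_def pnode_inner)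
  next
    assume "w = pn False e (j - 1)"
    then show ?thesis using 2 l_ge_2 outl_length[of e]
      by (cases "j = 1") (auto simp: tree_step_def pnode_0 pnode_private)
  qed
next
  case (3 e j)
  from neighbour_P[OF assms(1)[unfolded 3(1)]] 3
  have "w = pn False e (Suc j) \<or> w = pn False e (j - 1)" by auto
  then show ?thesis
  proof
    assume "w = pn False e (Suc j)"
    then show ?thesis using 3 inl_length[of e]
      by (cases "j = 2 * l") (auto simp: tree_step_def pnode_last pnode_private)
  next
    assume "w = pn False e (j - 1)"
    then show ?thesis using 3 assms(3)
      by (cases "j - 1 = Suc l") (auto simp: tree_step_def pnode_inner)
  qed
qed

lemma private_move:
  assumes r: "r \<in> VV" and step: "near adj r r'" and "r \<in> copy2_private"
  shows "near adj (fold_copy r) r' \<or> r' \<in> copy2_private \<and> tree_step private_depth private_branch r r'"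
proof (cases "in_copy1 r'")
  case True
  then show ?thesis using near_fold_copy[OF step] fold_copy_id by metis
next
  case False
  then have "r' \<in> copy2_private" using near_in step r by blast
  moreover have "tree_step private_depth private_branch r r'"
    using step private_tree_step[OF _ assms(3) calculation] by (auto simp: rob_step_def tree_step_def)
  ultimately show ?thesis by blast
qed

lemma catch_robber:
  "p1 \<in> VV \<Longrightarrow> p2 \<in> VV \<Longrightarrow> r \<in> VV \<Longrightarrow> near adj p1 (fold_copy r) \<Longrightarrow>
    can_force adj (shadow_caught id) p1 p2 r"
  by (rule can_force_refine[OF rooted_paths_private, where g = fold_copy])
    (use fold_copy_in_VV near_fold_copy private_move in \<open>auto simp: fold_copy_id\<close>)

theorem two_cops_win: "cop_number VV adj \<le> 2"
proof (rule cop_number_le_2[OF q0_in_VV])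
  fix r assume "r \<in> VV"
  then have "can_force adj (shadow_caught cycle_retract) q0 q0 r" by (rule catch_cycle_shadow)
  then have "can_force adj (shadow_caught core_retract) q0 q0 r"
    using catch_core_shadow by (rule can_force_shadow_trans)
  then have "can_force adj (shadow_caught fold_copy) q0 q0 r"
    using catch_copy1_shadow by (rule can_force_shadow_trans)
  then show "can_force adj (shadow_caught id) q0 q0 r"
    using catch_robber by (rule can_force_shadow_trans)
qed

end

theorem lemma5:
  fixes s l m :: nat and V :: "'v set" and A :: "('v \<times> 'v) set"
    and inl outl :: "'v \<Rightarrow> 'v \<times> 'v \<Rightarrow> bool list" and \<sigma> :: "nat \<Rightarrow> 'v"
  assumes "s \<ge> 1" and "m \<ge> 1" and "l > card V + m + s"
    and "balanced_oriented_base (2 ^ (s - 1)) V A"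
    and "\<forall>a \<in> V. bij_betw (inl a) {e \<in> A. snd e = a} {xs. length xs = s \<and> hd xs = False}"
    and "\<forall>a \<in> V. bij_betw (outl a) {e \<in> A. fst e = a} {xs. length xs = s \<and> hd xs = True}"
    and "bij_betw \<sigma> {..<card V} V"
  shows "cop_number (Hverts s l m V A) (Hadj s l m V A inl outl \<sigma>) \<le> 2"
proof -
  have base: "finite V" "V \<noteq> {}" "A \<subseteq> V \<times> V"
    and out_degree: "\<And>a. a \<in> V \<Longrightarrow> card {b. (a, b) \<in> A} = 2 ^ (s - 1)"
    using assms(4) unfolding balanced_oriented_base_def by auto
  have "H_graph s l m V A inl outl \<sigma>"
  proof
    show "1 \<le> s" "1 \<le> m" "card V + m + s < l" using assms(1-3) by simp_all
    show "finite V" "V \<noteq> {}" "A \<subseteq> V \<times> V" by (fact base)+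
    show "bij_betw \<sigma> {..<card V} V" by (fact assms(7))
    show "\<exists>b. (a, b) \<in> A" if "a \<in> V" for a
    proof -
      have "card {b. (a, b) \<in> A} \<noteq> 0" using out_degree[OF that] by simp
      then show ?thesis by (metis card.empty empty_Collect_eq)
    qed
    fix e assume e: "e \<in> A"
    then have "fst e \<in> V" "snd e \<in> V" using base(3) by auto
    then show "length (outl (fst e) e) = s" "length (inl (snd e) e) = s"
      using bij_betw_apply[OF assms(6)[rule_format], of "fst e" e]
        bij_betw_apply[OF assms(5)[rule_format], of "snd e" e] e by auto
  qed
  then show ?thesis by (rule H_graph.two_cops_win)
qed

end
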